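(* Let $L$ be a C-lattice domain in which every element is a join of principal elements. If $L$ is sharp, then $L$ is a Prüfer lattice, i.e. every compact element of $L$ is principal.
   Context: A multiplicative lattice is a complete lattice $(L,\le)$ with bottom $0$ and top $1$ which is also a commutative monoid with identity $1$ such that $a(\bigvee_\alpha b_\alpha)=\bigvee_\alpha(ab_\alpha)$ for all $a,b_\alpha\in L$. For $x,y\in L$, $(y:x)=\bigvee\{a\in L: ax\le y\}$. An element $c$ is compact if $c\le\bigvee S$ implies $c\le\bigvee T$ for some finite $T\subseteq S$. A C-lattice is a multiplicative lattice in which $1$ is compact, the product of two compact elements is compact, and every element is a join of compact elements. A proper element $p\ne1$ is prime if $xy\le p$ implies $x\le p$ or $y\le p$; $L$ is a domain if $0$ is prime. An element $x$ is principal if $y\wedge zx=((y:x)\wedge z)x$ and $y\vee(z:x)=((yx\vee z):x)$ for all $y,z\in L$. $L$ is sharp if whenever $a_1a_2\le b$ with $a_1,a_2,b\in L$, there exist $b_1,b_2\in L$ with $a_i\le b_i$ ($i=1,2$) and $b=b_1b_2$. *)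

theory Defs
  imports Main
begin

class mult_lattice = complete_lattice + comm_monoid_mult +
  assumes one_eq_top: "(1::'a) = top"
  and mult_Sup_distrib: "a * Sup B = Sup ((\<lambda>b. a * b) ` B)"

context mult_lattice
begin

definition res :: "'a \<Rightarrow> 'a \<Rightarrow> 'a" where
  "res y x = Sup {a. a * x \<le> y}"   (* (y : x) *)

definition compact :: "'a \<Rightarrow> bool" where
  "compact c \<longleftrightarrow> (\<forall>S. c \<le> Sup S \<longrightarrow> (\<exists>T. finite T \<and> T \<subseteq> S \<and> c \<le> Sup T))"

definition prime_el :: "'a \<Rightarrow> bool" where
  "prime_el p \<longleftrightarrow> p \<noteq> 1 \<and> (\<forall>x y. x * y \<le> p \<longrightarrow> x \<le> p \<or> y \<le> p)"

definition principal :: "'a \<Rightarrow> bool" where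
  "principal x \<longleftrightarrow> (\<forall>y z. inf y (z * x) = (inf (res y x) z) * x
                          \<and> sup y (res z x) = res (sup (y * x) z) x)"

end

definition C_lattice :: "'a::mult_lattice itself \<Rightarrow> bool" where
  "C_lattice _ \<longleftrightarrow> compact (1::'a)
     \<and> (\<forall>a b::'a. compact a \<and> compact b \<longrightarrow> compact (a * b))
     \<and> (\<forall>x::'a. \<exists>S. (\<forall>s\<in>S. compact s) \<and> x = Sup S)"

definition lattice_domain :: "'a::mult_lattice itself \<Rightarrow> bool" where
  "lattice_domain _ \<longleftrightarrow> prime_el (bot::'a)"

definition principally_generated :: "'a::mult_lattice itself \<Rightarrow> bool" where
  "principally_generated _ \<longleftrightarrow> (\<forall>x::'a. \<exists>S. (\<forall>s\<in>S. principal s) \<and> x = Sup S)"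

definition sharp :: "'a::mult_lattice itself \<Rightarrow> bool" where
  "sharp _ \<longleftrightarrow> (\<forall>a1 a2 b::'a. a1 * a2 \<le> b \<longrightarrow>
      (\<exists>b1 b2. a1 \<le> b1 \<and> a2 \<le> b2 \<and> b = b1 * b2))"

definition Prufer_lattice :: "'a::mult_lattice itself \<Rightarrow> bool" where
  "Prufer_lattice _ \<longleftrightarrow> (\<forall>c::'a. compact c \<longrightarrow> principal c)"

end

theory Submission
  imports Defs
begin

(* A compact element is a finite join of principal elements, so it suffices that in a sharp
   domain the join c of two principal elements x, y is principal.  Sharpness applied to
   c (x : c) <= x factors x = b1 b2 with c <= b1 and (x : c) <= b2.  Factors of nonzero
   principal elements are principal, so x = p b1 and y = q b1 with b1, p, q principal, and
   cancelling b1 gives (p : q) <= p and then (q : p) <= q.  A second use of sharpness, on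
   q^2 <= p v q^2, turns these two inequalities into p v q = 1, whence c = b1. *)

context mult_lattice
begin

lemma mult_sup_distrib_left: "a * sup b c = sup (a * b) (a * c)"
  using mult_Sup_distrib[of a "{b, c}"] by simp

lemma mult_sup_distrib_right: "sup b c * a = sup (b * a) (c * a)"
  using mult_sup_distrib_left by (simp add: mult.commute)

lemma mult_bot_right [simp]: "a * bot = bot"
  using mult_Sup_distrib[of a "{}"] by simp

lemma mult_bot_left [simp]: "bot * a = bot"
  using mult_bot_right by (simp add: mult.commute)

lemma mult_top_left [simp]: "top * a = a"
  and mult_top_right [simp]: "a * top = a"
  by (simp_all flip: one_eq_top)

lemma mult_right_mono: "a \<le> b \<Longrightarrow> a * c \<le> b * c"
  by (metis mult_sup_distrib_right sup.absorb_iff2 sup.cobounded1)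

lemma mult_left_mono: "a \<le> b \<Longrightarrow> c * a \<le> c * b"
  using mult_right_mono by (simp add: mult.commute)

lemma mult_mono: "a \<le> b \<Longrightarrow> c \<le> d \<Longrightarrow> a * c \<le> b * d"
  by (meson mult_left_mono mult_right_mono order_trans)

lemma mult_le_left: "a * b \<le> a"
  using mult_left_mono[of b top a] by simp

lemma res_mult_le: "res y x * x \<le> y"
proof -
  have "res y x * x = x * Sup {a. a * x \<le> y}"
    by (simp add: res_def mult.commute)
  also have "\<dots> = Sup ((\<lambda>a. x * a) ` {a. a * x \<le> y})"
    by (rule mult_Sup_distrib)
  also have "\<dots> \<le> y"
    by (auto intro!: SUP_least simp: mult.commute)
  finally show ?thesis .
qed

lemma le_res_iff: "a \<le> res y x \<longleftrightarrow> a * x \<le> y"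
proof
  show "a \<le> res y x \<Longrightarrow> a * x \<le> y"
    using mult_right_mono res_mult_le order_trans by blast
  show "a * x \<le> y \<Longrightarrow> a \<le> res y x"
    by (simp add: res_def Sup_upper)
qed

lemma res_mono: "y \<le> y' \<Longrightarrow> res y x \<le> res y' x"
  by (meson le_res_iff order_trans res_mult_le)

lemma res_bot_eq_bot:
  assumes "prime_el bot" and "x \<noteq> bot"
  shows "res bot x = bot"
  using assms bot_unique le_res_iff unfolding prime_el_def by blast

lemma principal_meet: "principal x \<Longrightarrow> inf y (z * x) = inf (res y x) z * x"
  unfolding principal_def by blast

lemma principal_join: "principal x \<Longrightarrow> sup y (res z x) = res (sup (y * x) z) x"
  unfolding principal_def by blast

lemma principal_res_mult_eq: "principal x \<Longrightarrow> y \<le> x \<Longrightarrow> res y x * x = y"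
  using principal_meet[of x y top] by (simp add: inf_absorb1)

lemma principal_bot: "principal bot"
proof -
  have "res z bot = top" for z
    by (simp add: res_def)
  then show ?thesis
    by (simp add: principal_def)
qed

lemma principal_mult_right_cancel:
  assumes "prime_el bot" and "principal x" and "x \<noteq> bot" and "u * x \<le> v * x"
  shows "u \<le> v"
proof -
  have "u \<le> res (sup (v * x) bot) x"
    using assms(4) by (simp add: le_res_iff)
  also have "\<dots> = sup v (res bot x)"
    using principal_join[OF assms(2)] by metis
  also have "\<dots> = v"
    using res_bot_eq_bot[OF assms(1,3)] by simp
  finally show ?thesis .
qed

lemma principal_factor:
  assumes dom: "prime_el bot" and px: "principal x" and "x \<noteq> bot" and cd: "c * d = x"
  shows "principal c"
proof -
  note cancel = principal_mult_right_cancel[OF dom px \<open>x \<noteq> bot\<close>]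
  have res_le: "res (y * d) x \<le> res y c" for y
  proof -
    have "res (y * d) x * c * x = res (y * d) x * x * c"
      by (simp add: ac_simps)
    also have "\<dots> \<le> y * d * c"
      by (intro mult_right_mono res_mult_le)
    also have "\<dots> = y * x"
      by (simp flip: cd add: ac_simps)
    finally show ?thesis
      using cancel le_res_iff by blast
  qed
  have "inf y (z * c) = inf (res y c) z * c" for y z
  proof (rule order.antisym)
    have "inf y (z * c) * d \<le> inf (y * d) (z * x)"
      by (simp add: mult_right_mono flip: cd mult.assoc)
    also have "\<dots> = inf (res (y * d) x) z * x"
      by (rule principal_meet[OF px])
    also have "\<dots> \<le> inf (res y c) z * x"
      by (intro mult_right_mono inf_mono res_le order_refl)
    finally have "inf y (z * c) * d * c \<le> inf (res y c) z * x * c"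
      by (rule mult_right_mono)
    then have "inf y (z * c) * x \<le> inf (res y c) z * c * x"
      by (simp flip: cd add: ac_simps)
    then show "inf y (z * c) \<le> inf (res y c) z * c"
      by (rule cancel)
    show "inf (res y c) z * c \<le> inf y (z * c)"
      by (meson inf.bounded_iff inf_le1 inf_le2 mult_right_mono order_trans res_mult_le)
  qed
  moreover have "sup y (res z c) = res (sup (y * c) z) c" for y z
  proof (rule order.antisym)
    show "sup y (res z c) \<le> res (sup (y * c) z) c"
      using res_mult_le[of z c] by (simp add: le_res_iff mult_sup_distrib_right le_supI2)
    have "res (sup (y * c) z) c * x \<le> sup (y * c) z * d"
      by (metis mult_right_mono res_mult_le cd mult.assoc)
    also have "\<dots> = sup (y * x) (z * d)"
      by (simp add: mult_sup_distrib_right mult.assoc cd)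
    finally have "res (sup (y * c) z) c \<le> res (sup (y * x) (z * d)) x"
      by (simp add: le_res_iff)
    also have "\<dots> = sup y (res (z * d) x)"
      using principal_join[OF px] by metis
    also have "\<dots> \<le> sup y (res z c)"
      using res_le sup_mono by blast
    finally show "res (sup (y * c) z) c \<le> sup y (res z c)" .
  qed
  ultimately show ?thesis
    by (simp add: principal_def)
qed

lemma res_le_swap:
  assumes dom: "prime_el bot" and pp: "principal p" and pq: "principal q" and "p \<noteq> bot"
    and "res p q \<le> p"
  shows "res q p \<le> q"
proof -
  have "res q p * p = inf q p"
    using principal_meet[OF pp, of q top] by simp
  also have "\<dots> = res p q * q"
    using principal_meet[OF pq, of p top] by (simp add: inf_commute)
  also have "\<dots> \<le> q * p"
    using mult_right_mono[OF \<open>res p q \<le> p\<close>] by (metis mult.commute)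
  finally show ?thesis
    using principal_mult_right_cancel[OF dom pp \<open>p \<noteq> bot\<close>] by blast
qed

end

lemma sup_eq_top_if_res_le:
  fixes p q :: "'a::mult_lattice"
  assumes sharp: "sharp TYPE('a)" and pp: "principal p" and pq: "principal q"
    and "res p q \<le> p" and "res q p \<le> q"
  shows "sup p q = top"
proof -
  obtain e1 e2 where "q \<le> e1" "q \<le> e2" and e12: "sup p (q * q) = e1 * e2"
    using sharp unfolding sharp_def by (meson sup_ge2)
  have "res (sup p (q * q)) q = sup q (res p q)"
    using principal_join[OF pq, of q p] by (simp add: sup_commute)
  also have "\<dots> \<le> sup p q"
    using \<open>res p q \<le> p\<close> by (simp add: le_supI1)
  finally have res_le: "res (e1 * e2) q \<le> sup p q"
    by (simp add: e12)
  have "e1 \<le> sup p q" "e2 \<le> sup p q"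
    using \<open>q \<le> e1\<close> \<open>q \<le> e2\<close> mult_left_mono[of q _ e1] mult_left_mono[of q _ e2]
      res_le le_res_iff order_trans by (metis mult.commute)+
  then have "p \<le> sup p q * sup p q"
    using e12 mult_mono sup_ge1 order_trans by metis
  also have "\<dots> \<le> sup (sup p q * p) (q * q)"
    by (simp add: mult_sup_distrib_left mult_sup_distrib_right mult.commute le_supI1)
  finally have "top \<le> res (sup (sup p q * p) (q * q)) p"
    by (simp add: le_res_iff)
  also have "\<dots> = sup (sup p q) (res (q * q) p)"
    using principal_join[OF pp] by metis
  also have "\<dots> \<le> sup p q"
    using res_mono[OF mult_le_left, of q q p] \<open>res q p \<le> q\<close> by (simp add: le_supI2)
  finally show ?thesis
    by (simp add: top_unique)
qed

lemma principal_sup: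
  fixes x y :: "'a::mult_lattice"
  assumes dom: "prime_el (bot::'a)" and sharp: "sharp TYPE('a)"
    and px: "principal x" and py: "principal y"
  shows "principal (sup x y)"
proof (cases "x = bot \<or> y = bot")
  case True
  then show ?thesis
    using px py by auto
next
  case False
  then have "x \<noteq> bot" "y \<noteq> bot"
    by auto
  define c where "c = sup x y"
  obtain b1 b2 where "c \<le> b1" and res_le_b2: "res x c \<le> b2" and x_eq: "x = b1 * b2"
    using sharp res_mult_le[of x c] unfolding sharp_def by (metis mult.commute)
  have pb1: "principal b1" and "b1 \<noteq> bot"
    using principal_factor[OF dom px \<open>x \<noteq> bot\<close>] x_eq \<open>x \<noteq> bot\<close> by auto
  note cancel_b1 = principal_mult_right_cancel[OF dom pb1 \<open>b1 \<noteq> bot\<close>]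
  define p where "p = res x b1"
  define q where "q = res y b1"
  have xp: "x = p * b1" and yq: "y = q * b1"
    using principal_res_mult_eq[OF pb1] \<open>c \<le> b1\<close> unfolding p_def q_def c_def by auto
  have pp: "principal p" and pq: "principal q" and "p \<noteq> bot"
    using principal_factor[OF dom px \<open>x \<noteq> bot\<close>] principal_factor[OF dom py \<open>y \<noteq> bot\<close>]
      xp yq \<open>x \<noteq> bot\<close> by auto
  have "res p q \<le> p"
  proof -
    have "res p q * y \<le> x"
      using mult_right_mono[OF res_mult_le, of p q b1] by (simp add: xp yq mult.assoc)
    moreover have "res p q * x \<le> x"
      by (metis mult_le_left mult.commute)
    ultimately have "res p q \<le> res x c"
      by (simp add: c_def le_res_iff mult_sup_distrib_left)
    then have "res p q \<le> b2"
      using res_le_b2 by (rule order_trans)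
    then have "res p q * b1 \<le> p * b1"
      using mult_right_mono x_eq xp by (metis mult.commute)
    then show ?thesis
      by (rule cancel_b1)
  qed
  then have "sup p q = top"
    using sup_eq_top_if_res_le[OF sharp pp pq] res_le_swap[OF dom pp pq \<open>p \<noteq> bot\<close>] by blast
  then have "c = b1"
    by (simp add: c_def xp yq flip: mult_sup_distrib_right)
  then show ?thesis
    using pb1 by (simp add: c_def)
qed

lemma principal_Sup_finite:
  fixes T :: "'a::mult_lattice set"
  assumes "prime_el (bot::'a)" and "sharp TYPE('a)"
  shows "finite T \<Longrightarrow> \<forall>s\<in>T. principal s \<Longrightarrow> principal (Sup T)"
  by (induction T rule: finite_induct) (simp_all add: principal_bot principal_sup[OF assms])

lemma compact_Sup_eq_finite_Sup:
  fixes S :: "'a::mult_lattice set"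
  assumes "compact (Sup S)"
  obtains T where "finite T" "T \<subseteq> S" "Sup T = Sup S"
  using assms Sup_subset_mono unfolding compact_def by (metis order.refl order.antisym)

theorem proposition3p5:
  assumes "C_lattice TYPE('a::mult_lattice)"
    and "lattice_domain TYPE('a)"
    and "principally_generated TYPE('a)"
    and "sharp TYPE('a)"
  shows "Prufer_lattice TYPE('a)"
  unfolding Prufer_lattice_def
proof (intro allI impI)
  fix c :: 'a
  assume "compact c"
  obtain S where "\<forall>s\<in>S. principal s" and "c = Sup S"
    using assms(3) unfolding principally_generated_def by blast
  moreover obtain T where "finite T" "T \<subseteq> S" "Sup T = Sup S"
    using compact_Sup_eq_finite_Sup \<open>compact c\<close> \<open>c = Sup S\<close> by metis
  ultimately show "principal c"
    using principal_Sup_finite assms(2,4) unfolding lattice_domain_def by (metis subsetD)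
qed

end
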